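(* Let $(V,L,\varphi,E)$ and $(V,C,\psi,E)$ be valuation systems. Assume that $\psi$ extends $\varphi$ and that $(V,C,\psi,E)$ is complete. Then $\varphi$ is extendible and $\psi$ extends $\overline\varphi$.
   Context: A valuation system $(V,L,\varphi,E)$ consists of: (i) a lattice $V$ which is $\sigma$-distributive (for every $a\in V$ and sequence $(b_n)$ with existing infimum, $\bigwedge_n(a\vee b_n)$ exists and equals $a\vee\bigwedge_n b_n$, and dually for suprema); (ii) a sublattice $L$ of $V$; (iii) a partially ordered abelian group $E$ which is R-complete (whenever $x_1\ge x_2\ge\cdots$ and $y_1\ge y_2\ge\cdots$ in $E$ are such that $\bigwedge_n(x_n+y_n)$ exists, $\bigwedge_n x_n$ and $\bigwedge_n y_n$ exist; dually for increasing sequences); (iv) a valuation $\varphi:L\to E$ (order-preserving, $\varphi(a\wedge b)+\varphi(a\vee b)=\varphi(a)+\varphi(b)$). A map $\psi:C\to E$ extends $\varphi:L\to E$ if $L\subseteq C$ and $\psi|_L=\varphi$. A decreasing (resp. increasing) sequence $(a_n)$ in $L$ is $\varphi$-convergent if $\bigwedge_n a_n$ exists in $V$ and $\bigwedge_n\varphi(a_n)$ exists in $E$ (resp. with suprema). The system is $\Pi$-complete if for every $\varphi$-convergent decreasing $(a_n)$ in $L$, $\bigwedge_n a_n\in L$ and $\varphi(\bigwedge_n a_n)=\bigwedge_n\varphi(a_n)$; $\Sigma$-complete dually; complete if both. $\Pi L:=\{\bigwedge_n a_n:(a_n)\ \varphi\text{-convergent decreasing}\}$ and $\varphi$ is $\Pi$-extendible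 if there is a valuation $\Pi\varphi:\Pi L\to E$ with $\Pi\varphi(\bigwedge_n a_n)=\bigwedge_n\varphi(a_n)$; $\Sigma L,\Sigma\varphi$ dually. Hierarchy (transfinite recursion): $\Pi_0\varphi=\Sigma_0\varphi=\varphi$; $\varphi$ is $\Pi_{\alpha+1}$-extendible iff it is $\Sigma_\alpha$-extendible and $\Sigma_\alpha\varphi$ is $\Pi$-extendible, with $\Pi_{\alpha+1}\varphi=\Pi(\Sigma_\alpha\varphi)$; $\varphi$ is $\Sigma_{\alpha+1}$-extendible iff it is $\Pi_\alpha$-extendible and $\Pi_\alpha\varphi$ is $\Sigma$-extendible, with $\Sigma_{\alpha+1}\varphi=\Sigma(\Pi_\alpha\varphi)$; at a limit $\lambda$, $\varphi$ is $\Pi_\lambda$-extendible iff $\Pi_\alpha$-extendible for all $\alpha<\lambda$, and then $\Pi_\lambda\varphi$ is the common extension of the $\Pi_\alpha\varphi$ on $\bigcup_{\alpha<\lambda}\Pi_\alpha L$; similarly $\Sigma_\lambda$. The hierarchy has collapsed at $Q$, where $Q=\Pi_\alpha\varphi$ or $Q=\Sigma_\alpha\varphi$, if $\varphi$ is $\Pi_{\alpha+1}$- and $\Sigma_{\alpha+1}$-extendible and $\Pi(Q)=Q=\Sigma(Q)$. $\varphi$ is extendible if the hierarchy has collapsed at some $Q$; this $Q$ is then unique and denoted $\overline\varphi$. *)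

theory Defs
  imports Complex_Main
begin

definition is_glb :: "'a::order set \<Rightarrow> 'a \<Rightarrow> bool" where
  "is_glb A x \<longleftrightarrow> (\<forall>y\<in>A. x \<le> y) \<and> (\<forall>z. (\<forall>y\<in>A. z \<le> y) \<longrightarrow> z \<le> x)"

definition is_lub :: "'a::order set \<Rightarrow> 'a \<Rightarrow> bool" where
  "is_lub A x \<longleftrightarrow> (\<forall>y\<in>A. y \<le> x) \<and> (\<forall>z. (\<forall>y\<in>A. y \<le> z) \<longrightarrow> x \<le> z)"

definition has_inf :: "(nat \<Rightarrow> 'a::order) \<Rightarrow> bool" where
  "has_inf a \<longleftrightarrow> (\<exists>x. is_glb (range a) x)"

definition has_sup :: "(nat \<Rightarrow> 'a::order) \<Rightarrow> bool" where
  "has_sup a \<longleftrightarrow> (\<exists>x. is_lub (range a) x)"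

definition inf_seq :: "(nat \<Rightarrow> 'a::order) \<Rightarrow> 'a" where
  "inf_seq a = (THE x. is_glb (range a) x)"

definition sup_seq :: "(nat \<Rightarrow> 'a::order) \<Rightarrow> 'a" where
  "sup_seq a = (THE x. is_lub (range a) x)"

text \<open>The lattice V is the whole type 'a (class lattice); E is the type 'e
  (class ordered_ab_group_add).\<close>

definition sigma_distributive :: "'a::lattice itself \<Rightarrow> bool" where
  "sigma_distributive (T::'a itself) \<longleftrightarrow>
     (\<forall>(a::'a) (b::nat \<Rightarrow> 'a) x. is_glb (range b) x \<longrightarrow> is_glb (range (\<lambda>n. sup a (b n))) (sup a x)) \<and>
     (\<forall>(a::'a) (b::nat \<Rightarrow> 'a) x. is_lub (range b) x \<longrightarrow> is_lub (range (\<lambda>n. inf a (b n))) (inf a x))"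

definition R_complete :: "'e::ordered_ab_group_add itself \<Rightarrow> bool" where
  "R_complete (T::'e itself) \<longleftrightarrow>
     (\<forall>(x::nat \<Rightarrow> 'e) y. decseq x \<and> decseq y \<and> has_inf (\<lambda>n. x n + y n)
         \<longrightarrow> has_inf x \<and> has_inf y) \<and>
     (\<forall>(x::nat \<Rightarrow> 'e) y. incseq x \<and> incseq y \<and> has_sup (\<lambda>n. x n + y n)
         \<longrightarrow> has_sup x \<and> has_sup y)"

definition sublattice :: "'a::lattice set \<Rightarrow> bool" where
  "sublattice L \<longleftrightarrow> (\<forall>a\<in>L. \<forall>b\<in>L. inf a b \<in> L \<and> sup a b \<in> L)"

definition valuation :: "'a::lattice set \<Rightarrow> ('a \<Rightarrow> 'e::ordered_ab_group_add) \<Rightarrow> bool" where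
  "valuation L \<phi> \<longleftrightarrow>
     (\<forall>a\<in>L. \<forall>b\<in>L. a \<le> b \<longrightarrow> \<phi> a \<le> \<phi> b) \<and>
     (\<forall>a\<in>L. \<forall>b\<in>L. \<phi> (inf a b) + \<phi> (sup a b) = \<phi> a + \<phi> b)"

definition valuation_system ::
  "'a::lattice set \<Rightarrow> ('a \<Rightarrow> 'e::ordered_ab_group_add) \<Rightarrow> bool" where
  "valuation_system L \<phi> \<longleftrightarrow>
     sigma_distributive TYPE('a) \<and> R_complete TYPE('e) \<and> sublattice L \<and> valuation L \<phi>"

definition extends :: "'a set \<Rightarrow> ('a \<Rightarrow> 'e) \<Rightarrow> 'a set \<Rightarrow> ('a \<Rightarrow> 'e) \<Rightarrow> bool" where
  "extends C \<psi> L \<phi> \<longleftrightarrow> L \<subseteq> C \<and> (\<forall>x\<in>L. \<psi> x = \<phi> x)"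

definition conv_dec :: "'a::lattice set \<Rightarrow> ('a \<Rightarrow> 'e::ordered_ab_group_add) \<Rightarrow> (nat \<Rightarrow> 'a) \<Rightarrow> bool" where
  "conv_dec L \<phi> a \<longleftrightarrow> (\<forall>n. a n \<in> L) \<and> decseq a \<and> has_inf a \<and> has_inf (\<lambda>n. \<phi> (a n))"

definition conv_inc :: "'a::lattice set \<Rightarrow> ('a \<Rightarrow> 'e::ordered_ab_group_add) \<Rightarrow> (nat \<Rightarrow> 'a) \<Rightarrow> bool" where
  "conv_inc L \<phi> a \<longleftrightarrow> (\<forall>n. a n \<in> L) \<and> incseq a \<and> has_sup a \<and> has_sup (\<lambda>n. \<phi> (a n))"

definition Pi_complete :: "'a::lattice set \<Rightarrow> ('a \<Rightarrow> 'e::ordered_ab_group_add) \<Rightarrow> bool" where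
  "Pi_complete L \<phi> \<longleftrightarrow>
     (\<forall>a. conv_dec L \<phi> a \<longrightarrow> inf_seq a \<in> L \<and> \<phi> (inf_seq a) = inf_seq (\<lambda>n. \<phi> (a n)))"

definition Sigma_complete :: "'a::lattice set \<Rightarrow> ('a \<Rightarrow> 'e::ordered_ab_group_add) \<Rightarrow> bool" where
  "Sigma_complete L \<phi> \<longleftrightarrow>
     (\<forall>a. conv_inc L \<phi> a \<longrightarrow> sup_seq a \<in> L \<and> \<phi> (sup_seq a) = sup_seq (\<lambda>n. \<phi> (a n)))"

definition complete_vs :: "'a::lattice set \<Rightarrow> ('a \<Rightarrow> 'e::ordered_ab_group_add) \<Rightarrow> bool" where
  "complete_vs L \<phi> \<longleftrightarrow> Pi_complete L \<phi> \<and> Sigma_complete L \<phi>"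

text \<open>Partial maps into E are represented as pairs (domain, function); the
  function is irrelevant outside the domain.\<close>
type_synonym ('a, 'e) pmap = "'a set \<times> ('a \<Rightarrow> 'e)"

definition pm_eq :: "('a, 'e) pmap \<Rightarrow> ('a, 'e) pmap \<Rightarrow> bool" where
  "pm_eq P Q \<longleftrightarrow> fst P = fst Q \<and> (\<forall>x\<in>fst P. snd P x = snd Q x)"

definition Pi_dom :: "('a::lattice, 'e::ordered_ab_group_add) pmap \<Rightarrow> 'a set" where
  "Pi_dom P = {inf_seq a | a. conv_dec (fst P) (snd P) a}"

definition Sigma_dom :: "('a::lattice, 'e::ordered_ab_group_add) pmap \<Rightarrow> 'a set" where
  "Sigma_dom P = {sup_seq a | a. conv_inc (fst P) (snd P) a}"

definition Pi_fun :: "('a::lattice, 'e::ordered_ab_group_add) pmap \<Rightarrow> 'a \<Rightarrow> 'e" where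
  "Pi_fun P x = (SOME e. \<exists>a. conv_dec (fst P) (snd P) a \<and> inf_seq a = x \<and> inf_seq (\<lambda>n. snd P (a n)) = e)"

definition Sigma_fun :: "('a::lattice, 'e::ordered_ab_group_add) pmap \<Rightarrow> 'a \<Rightarrow> 'e" where
  "Sigma_fun P x = (SOME e. \<exists>a. conv_inc (fst P) (snd P) a \<and> sup_seq a = x \<and> sup_seq (\<lambda>n. snd P (a n)) = e)"

text \<open>\<Pi>-extendible: there is a valuation \<Pi>\<phi> on \<Pi>L with \<Pi>\<phi>(\<And>a_n) = \<And>\<phi>(a_n).
  Such a map is necessarily Pi_fun, so this is the definition unfolded.\<close>
definition Pi_extendible :: "('a::lattice, 'e::ordered_ab_group_add) pmap \<Rightarrow> bool" where
  "Pi_extendible P \<longleftrightarrow>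
     (\<exists>\<chi>. valuation (Pi_dom P) \<chi> \<and>
        (\<forall>a. conv_dec (fst P) (snd P) a \<longrightarrow> \<chi> (inf_seq a) = inf_seq (\<lambda>n. snd P (a n))))"

definition Sigma_extendible :: "('a::lattice, 'e::ordered_ab_group_add) pmap \<Rightarrow> bool" where
  "Sigma_extendible P \<longleftrightarrow>
     (\<exists>\<chi>. valuation (Sigma_dom P) \<chi> \<and>
        (\<forall>a. conv_inc (fst P) (snd P) a \<longrightarrow> \<chi> (sup_seq a) = sup_seq (\<lambda>n. snd P (a n))))"

definition Pi_ext :: "('a::lattice, 'e::ordered_ab_group_add) pmap \<Rightarrow> ('a, 'e) pmap" where
  "Pi_ext P = (Pi_dom P, Pi_fun P)"

definition Sigma_ext :: "('a::lattice, 'e::ordered_ab_group_add) pmap \<Rightarrow> ('a, 'e) pmap" where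
  "Sigma_ext P = (Sigma_dom P, Sigma_fun P)"

text \<open>Ordinals are represented by elements of the field of a well-order r.
  A stage map H assigns to each index \<beta> and each flag (True = \<Pi>, False = \<Sigma>)
  the partial map \<Pi>_\<beta>\<phi> resp. \<Sigma>_\<beta>\<phi>.\<close>

definition wo_zero :: "('i \<times> 'i) set \<Rightarrow> 'i \<Rightarrow> bool" where
  "wo_zero r \<beta> \<longleftrightarrow> \<beta> \<in> Field r \<and> (\<forall>\<delta>\<in>Field r. (\<beta>, \<delta>) \<in> r)"

definition wo_succ_of :: "('i \<times> 'i) set \<Rightarrow> 'i \<Rightarrow> 'i \<Rightarrow> bool" where
  "wo_succ_of r \<gamma> \<beta> \<longleftrightarrow> (\<gamma>, \<beta>) \<in> r \<and> \<gamma> \<noteq> \<beta> \<and>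
     (\<forall>\<delta>. (\<gamma>, \<delta>) \<in> r \<and> (\<delta>, \<beta>) \<in> r \<longrightarrow> \<delta> = \<gamma> \<or> \<delta> = \<beta>)"

definition wo_limit :: "('i \<times> 'i) set \<Rightarrow> 'i \<Rightarrow> bool" where
  "wo_limit r \<beta> \<longleftrightarrow> \<beta> \<in> Field r \<and> \<not> wo_zero r \<beta> \<and> \<not> (\<exists>\<gamma>. wo_succ_of r \<gamma> \<beta>)"

text \<open>hierarchy r L \<phi> H \<theta>: H realises the hierarchy at all stages \<beta> \<le> \<theta>,
  i.e. \<phi> is \<Pi>_\<beta>- and \<Sigma>_\<beta>-extendible for all \<beta> \<le> \<theta> with
  \<Pi>_\<beta>\<phi> = H \<beta> True and \<Sigma>_\<beta>\<phi> = H \<beta> False.\<close>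
definition hierarchy ::
  "('i \<times> 'i) set \<Rightarrow> 'a::lattice set \<Rightarrow> ('a \<Rightarrow> 'e::ordered_ab_group_add)
   \<Rightarrow> ('i \<Rightarrow> bool \<Rightarrow> ('a, 'e) pmap) \<Rightarrow> 'i \<Rightarrow> bool" where
  "hierarchy r L \<phi> H \<theta> \<longleftrightarrow>
    (\<forall>\<beta>. (\<beta>, \<theta>) \<in> r \<longrightarrow>
      (wo_zero r \<beta> \<longrightarrow> pm_eq (H \<beta> True) (L, \<phi>) \<and> pm_eq (H \<beta> False) (L, \<phi>)) \<and>
      (\<forall>\<gamma>. wo_succ_of r \<gamma> \<beta> \<longrightarrow>
          Pi_extendible (H \<gamma> False) \<and> pm_eq (H \<beta> True) (Pi_ext (H \<gamma> False)) \<and>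
          Sigma_extendible (H \<gamma> True) \<and> pm_eq (H \<beta> False) (Sigma_ext (H \<gamma> True))) \<and>
      (wo_limit r \<beta> \<longrightarrow>
          (\<forall>k. fst (H \<beta> k) = (\<Union>\<gamma>\<in>{\<gamma>. (\<gamma>, \<beta>) \<in> r \<and> \<gamma> \<noteq> \<beta>}. fst (H \<gamma> k)) \<and>
               (\<forall>\<gamma>. (\<gamma>, \<beta>) \<in> r \<and> \<gamma> \<noteq> \<beta> \<longrightarrow>
                    (\<forall>x\<in>fst (H \<gamma> k). snd (H \<beta> k) x = snd (H \<gamma> k) x)))))"

text \<open>Ordinal indices
  range over well-orders on the type 'a set set.\<close>
definition collapsed_at ::
  "'a::lattice set \<Rightarrow> ('a \<Rightarrow> 'e::ordered_ab_group_add) \<Rightarrow> ('a, 'e) pmap \<Rightarrow> bool" where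
  "collapsed_at L \<phi> Q \<longleftrightarrow>
    (\<exists>(r :: ('a set set \<times> 'a set set) set) \<alpha> \<beta> H k.
        Well_order r \<and> wo_succ_of r \<alpha> \<beta> \<and> hierarchy r L \<phi> H \<beta> \<and> Q = H \<alpha> k \<and>
        Pi_extendible Q \<and> pm_eq (Pi_ext Q) Q \<and>
        Sigma_extendible Q \<and> pm_eq (Sigma_ext Q) Q)"

definition extendible :: "'a::lattice set \<Rightarrow> ('a \<Rightarrow> 'e::ordered_ab_group_add) \<Rightarrow> bool" where
  "extendible L \<phi> \<longleftrightarrow> (\<exists>Q. collapsed_at L \<phi> Q)"

definition phibar :: "'a::lattice set \<Rightarrow> ('a \<Rightarrow> 'e::ordered_ab_group_add) \<Rightarrow> ('a, 'e) pmap" where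
  "phibar L \<phi> = (SOME Q. collapsed_at L \<phi> Q)"

end

theory Submission
  imports Defs
begin

(* Once \<psi> is complete, every stage of the \<Pi>/\<Sigma>-hierarchy of \<phi> is just the restriction
   of \<psi> to its domain: the infimum or supremum of a convergent monotone sequence on which
   the previous stage agrees with \<psi> lies in C, and its value is the limit of the values, by
   completeness of \<psi>. So every stage is \<Pi>- and \<Sigma>-extendible (with \<psi> as the extension),
   and only the domains have to be constructed: by transfinite iteration along a well-order,
   which makes them grow monotonically. If they grew strictly at every successor step, a
   choice of a new point of V \<times> {\<Pi>, \<Sigma>} at each step would inject all but one index into
   V \<times> bool, which is impossible when the indices range over sets of sets of points. At a
   successor step where the domains stop growing, \<Pi>(Q) = Q = \<Sigma>(Q), so the hierarchy has
   collapsed; and every collapsed stage, \<phi>-bar in particular, is a restriction of \<psi>. *)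

section \<open>Infima and suprema of sequences\<close>

lemma inf_seq_eqI:
  assumes "is_glb (range a) x"
  shows "inf_seq a = x"
  unfolding inf_seq_def
proof (rule the_equality)
  show "is_glb (range a) y \<Longrightarrow> y = x" for y
    using assms unfolding is_glb_def by (meson order_antisym)
qed (fact assms)

lemma sup_seq_eqI:
  assumes "is_lub (range a) x"
  shows "sup_seq a = x"
  unfolding sup_seq_def
proof (rule the_equality)
  show "is_lub (range a) y \<Longrightarrow> y = x" for y
    using assms unfolding is_lub_def by (meson order_antisym)
qed (fact assms)

lemma is_glb_singleton: "is_glb {x} x"
  by (simp add: is_glb_def)

lemma is_lub_singleton: "is_lub {x} x"
  by (simp add: is_lub_def)

lemma inf_seq_const: "inf_seq (\<lambda>n. x) = x"
  by (rule inf_seq_eqI) (simp add: is_glb_singleton)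

lemma sup_seq_const: "sup_seq (\<lambda>n. x) = x"
  by (rule sup_seq_eqI) (simp add: is_lub_singleton)

lemma conv_dec_const: "x \<in> X \<Longrightarrow> conv_dec X f (\<lambda>n. x)"
  unfolding conv_dec_def has_inf_def by (auto simp: decseq_def intro: is_glb_singleton)

lemma conv_inc_const: "x \<in> X \<Longrightarrow> conv_inc X f (\<lambda>n. x)"
  unfolding conv_inc_def has_sup_def by (auto simp: incseq_def intro: is_lub_singleton)

lemma subset_Pi_dom: "fst P \<subseteq> Pi_dom P"
proof
  fix x assume "x \<in> fst P"
  then show "x \<in> Pi_dom P"
    unfolding Pi_dom_def
    by (intro CollectI exI[of _ "\<lambda>n. x"]) (simp add: conv_dec_const inf_seq_const)
qed

lemma subset_Sigma_dom: "fst P \<subseteq> Sigma_dom P"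
proof
  fix x assume "x \<in> fst P"
  then show "x \<in> Sigma_dom P"
    unfolding Sigma_dom_def
    by (intro CollectI exI[of _ "\<lambda>n. x"]) (simp add: conv_inc_const sup_seq_const)
qed

lemma Pi_dom_mono: "X \<subseteq> Y \<Longrightarrow> Pi_dom (X, f) \<subseteq> Pi_dom (Y, f)"
  unfolding Pi_dom_def conv_dec_def by auto

lemma Sigma_dom_mono: "X \<subseteq> Y \<Longrightarrow> Sigma_dom (X, f) \<subseteq> Sigma_dom (Y, f)"
  unfolding Sigma_dom_def conv_inc_def by auto

section \<open>Extensions by a complete valuation\<close>

lemma extends_pm_eq:
  "pm_eq P Q \<Longrightarrow> extends C \<psi> (fst Q) (snd Q) \<Longrightarrow> extends C \<psi> (fst P) (snd P)"
  unfolding pm_eq_def extends_def by auto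

lemma Pi_complete_inf_seq:
  assumes "Pi_complete C \<psi>" and "extends C \<psi> X f" and "conv_dec X f a"
  shows "inf_seq a \<in> C \<and> \<psi> (inf_seq a) = inf_seq (\<lambda>n. f (a n))"
proof -
  have "\<forall>n. a n \<in> X"
    using assms(3) by (simp add: conv_dec_def)
  then have "(\<lambda>n. f (a n)) = (\<lambda>n. \<psi> (a n))"
    using assms(2) by (simp add: extends_def)
  moreover from this have "conv_dec C \<psi> a"
    using assms(2,3) unfolding conv_dec_def extends_def by auto
  ultimately show ?thesis
    using assms(1) by (simp add: Pi_complete_def)
qed

lemma Sigma_complete_sup_seq:
  assumes "Sigma_complete C \<psi>" and "extends C \<psi> X f" and "conv_inc X f a"
  shows "sup_seq a \<in> C \<and> \<psi> (sup_seq a) = sup_seq (\<lambda>n. f (a n))"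
proof -
  have "\<forall>n. a n \<in> X"
    using assms(3) by (simp add: conv_inc_def)
  then have "(\<lambda>n. f (a n)) = (\<lambda>n. \<psi> (a n))"
    using assms(2) by (simp add: extends_def)
  moreover from this have "conv_inc C \<psi> a"
    using assms(2,3) unfolding conv_inc_def extends_def by auto
  ultimately show ?thesis
    using assms(1) by (simp add: Sigma_complete_def)
qed

lemma extends_Pi_ext:
  assumes compl: "Pi_complete C \<psi>" and ext: "extends C \<psi> (fst P) (snd P)"
  shows "extends C \<psi> (fst (Pi_ext P)) (snd (Pi_ext P))"
  unfolding extends_def Pi_ext_def fst_conv snd_conv
proof (intro conjI subsetI ballI)
  fix x assume "x \<in> Pi_dom P"
  then obtain a where a: "conv_dec (fst P) (snd P) a" "inf_seq a = x"
    unfolding Pi_dom_def by blast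
  note lim = Pi_complete_inf_seq[OF compl ext]
  show "x \<in> C"
    using lim[OF a(1)] a(2) by simp
  show "\<psi> x = Pi_fun P x"
    unfolding Pi_fun_def
  proof (rule someI2_ex)
    show "\<exists>e a. conv_dec (fst P) (snd P) a \<and> inf_seq a = x \<and> inf_seq (\<lambda>n. snd P (a n)) = e"
      using a by blast
  qed (use lim in blast)
qed

lemma extends_Sigma_ext:
  assumes compl: "Sigma_complete C \<psi>" and ext: "extends C \<psi> (fst P) (snd P)"
  shows "extends C \<psi> (fst (Sigma_ext P)) (snd (Sigma_ext P))"
  unfolding extends_def Sigma_ext_def fst_conv snd_conv
proof (intro conjI subsetI ballI)
  fix x assume "x \<in> Sigma_dom P"
  then obtain a where a: "conv_inc (fst P) (snd P) a" "sup_seq a = x"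
    unfolding Sigma_dom_def by blast
  note lim = Sigma_complete_sup_seq[OF compl ext]
  show "x \<in> C"
    using lim[OF a(1)] a(2) by simp
  show "\<psi> x = Sigma_fun P x"
    unfolding Sigma_fun_def
  proof (rule someI2_ex)
    show "\<exists>e a. conv_inc (fst P) (snd P) a \<and> sup_seq a = x \<and> sup_seq (\<lambda>n. snd P (a n)) = e"
      using a by blast
  qed (use lim in blast)
qed

lemma valuation_subset: "valuation C \<psi> \<Longrightarrow> X \<subseteq> C \<Longrightarrow> valuation X \<psi>"
  unfolding valuation_def by blast

lemma Pi_extendible_if_extends:
  assumes "valuation C \<psi>" and "Pi_complete C \<psi>" and "extends C \<psi> (fst P) (snd P)"
  shows "Pi_extendible P"
proof -
  have "Pi_dom P \<subseteq> C"
    using extends_Pi_ext[OF assms(2,3)] by (simp add: extends_def Pi_ext_def)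
  then show ?thesis
    unfolding Pi_extendible_def
    using valuation_subset[OF assms(1)] Pi_complete_inf_seq[OF assms(2,3)] by blast
qed

lemma Sigma_extendible_if_extends:
  assumes "valuation C \<psi>" and "Sigma_complete C \<psi>" and "extends C \<psi> (fst P) (snd P)"
  shows "Sigma_extendible P"
proof -
  have "Sigma_dom P \<subseteq> C"
    using extends_Sigma_ext[OF assms(2,3)] by (simp add: extends_def Sigma_ext_def)
  then show ?thesis
    unfolding Sigma_extendible_def
    using valuation_subset[OF assms(1)] Sigma_complete_sup_seq[OF assms(2,3)] by blast
qed

section \<open>Transfinite iteration along a well-order\<close>

definition wo_iterate :: "('i \<times> 'i) set \<Rightarrow> 'b::complete_lattice \<Rightarrow> ('b \<Rightarrow> 'b) \<Rightarrow> 'i \<Rightarrow> 'b" where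
  "wo_iterate r z F = wfrec (r - Id) (\<lambda>T \<beta>.
     if wo_zero r \<beta> then z
     else if \<exists>\<gamma>. wo_succ_of r \<gamma> \<beta> then F (T (SOME \<gamma>. wo_succ_of r \<gamma> \<beta>))
     else (SUP \<gamma>\<in>{\<gamma>. (\<gamma>, \<beta>) \<in> r - Id}. T \<gamma>))"

context wo_rel
begin

lemma wo_succ_of_pred_unique:
  assumes "wo_succ_of r \<gamma> \<beta>" and "wo_succ_of r \<gamma>' \<beta>"
  shows "\<gamma> = \<gamma>'"
  using assms TOTALS unfolding wo_succ_of_def by (metis FieldI1)

lemma wo_succ_of_succ_unique:
  assumes "wo_succ_of r \<gamma> \<beta>" and "wo_succ_of r \<gamma> \<beta>'"
  shows "\<beta> = \<beta>'"
  using assms TOTALS ANTISYM unfolding wo_succ_of_def antisym_def by (metis FieldI2)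

lemma wo_zero_not_succ: "wo_zero r \<beta> \<Longrightarrow> \<not> wo_succ_of r \<gamma> \<beta>"
  using ANTISYM unfolding wo_zero_def wo_succ_of_def antisym_def by (metis FieldI1)

lemma wo_succ_of_below:
  assumes "wo_succ_of r \<gamma> \<beta>" and "(\<delta>, \<beta>) \<in> r" and "\<delta> \<noteq> \<beta>"
  shows "(\<delta>, \<gamma>) \<in> r"
  using assms TOTALS unfolding wo_succ_of_def by (metis FieldI1)

lemma wo_succ_of_above:
  assumes "wo_succ_of r \<gamma> \<beta>" and "(\<gamma>, \<delta>) \<in> r" and "\<gamma> \<noteq> \<delta>"
  shows "(\<beta>, \<delta>) \<in> r"
  using assms TOTALS unfolding wo_succ_of_def by (metis FieldI1 FieldI2)

lemma wo_succ_of_exists: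
  assumes "(\<alpha>, \<delta>) \<in> r" and "\<alpha> \<noteq> \<delta>"
  shows "\<exists>\<beta>. wo_succ_of r \<alpha> \<beta>"
proof -
  define A where "A = {x. (\<alpha>, x) \<in> r \<and> x \<noteq> \<alpha>}"
  obtain \<beta> where "\<beta> \<in> A" and "\<And>y. (y, \<beta>) \<in> r - Id \<Longrightarrow> y \<notin> A"
    using wfE_min[OF WF, of \<delta> A] assms unfolding A_def by auto
  then have "wo_succ_of r \<alpha> \<beta>"
    unfolding wo_succ_of_def A_def by blast
  then show ?thesis ..
qed

lemma wo_succ_of_exists_but_max: "\<exists>m. \<forall>\<alpha>\<in>Field r - {m}. \<exists>\<beta>. wo_succ_of r \<alpha> \<beta>"
proof (cases "\<forall>\<alpha>\<in>Field r. \<exists>\<beta>. wo_succ_of r \<alpha> \<beta>")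
  case False
  then obtain m where m: "m \<in> Field r" "\<nexists>\<beta>. wo_succ_of r m \<beta>"
    by blast
  have "\<exists>\<beta>. wo_succ_of r \<alpha> \<beta>" if "\<alpha> \<in> Field r" "\<alpha> \<noteq> m" for \<alpha>
    using that m TOTALS wo_succ_of_exists by metis
  then show ?thesis by blast
qed blast

lemma wo_iterate_unfold:
  "wo_iterate r z F \<beta> =
     (if wo_zero r \<beta> then z
      else if \<exists>\<gamma>. wo_succ_of r \<gamma> \<beta> then F (wo_iterate r z F (SOME \<gamma>. wo_succ_of r \<gamma> \<beta>))
      else (SUP \<gamma>\<in>{\<gamma>. (\<gamma>, \<beta>) \<in> r - Id}. wo_iterate r z F \<gamma>))"
proof (cases "\<exists>\<gamma>. wo_succ_of r \<gamma> \<beta>")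
  case True
  then have "(SOME \<gamma>. wo_succ_of r \<gamma> \<beta>, \<beta>) \<in> r - Id"
    using someI_ex[OF True] by (auto simp: wo_succ_of_def)
  then show ?thesis
    unfolding wo_iterate_def by (subst wfrec[OF WF]) (simp add: cut_apply)
next
  case False
  then show ?thesis
    unfolding wo_iterate_def by (subst wfrec[OF WF]) (auto simp: cut_apply intro!: SUP_cong)
qed

lemma wo_iterate_zero: "wo_zero r \<beta> \<Longrightarrow> wo_iterate r z F \<beta> = z"
  by (simp add: wo_iterate_unfold)

lemma wo_iterate_succ: "wo_succ_of r \<gamma> \<beta> \<Longrightarrow> wo_iterate r z F \<beta> = F (wo_iterate r z F \<gamma>)"
  using wo_zero_not_succ wo_succ_of_pred_unique
  by (subst wo_iterate_unfold) (metis (mono_tags, lifting) someI)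

lemma wo_iterate_limit:
  "\<not> wo_zero r \<beta> \<Longrightarrow> \<nexists>\<gamma>. wo_succ_of r \<gamma> \<beta> \<Longrightarrow>
   wo_iterate r z F \<beta> = (SUP \<gamma>\<in>{\<gamma>. (\<gamma>, \<beta>) \<in> r - Id}. wo_iterate r z F \<gamma>)"
  by (subst wo_iterate_unfold) simp

lemma wo_iterate_le_step_and_mono:
  assumes "mono F" and "z \<le> F z"
  shows "wo_iterate r z F \<gamma> \<le> F (wo_iterate r z F \<gamma>) \<and>
    (\<forall>\<beta>. (\<beta>, \<gamma>) \<in> r \<longrightarrow> wo_iterate r z F \<beta> \<le> wo_iterate r z F \<gamma>)"
  (is "?T \<gamma> \<le> F (?T \<gamma>) \<and> ?mono \<gamma>")
proof (induction \<gamma> rule: wf_induct_rule[OF WF])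
  case (1 \<gamma>)
  consider (zero) "wo_zero r \<gamma>" | (succ) \<delta> where "wo_succ_of r \<delta> \<gamma>"
    | (limit) "\<not> wo_zero r \<gamma>" "\<nexists>\<delta>. wo_succ_of r \<delta> \<gamma>"
    by blast
  then show ?case
  proof cases
    case zero
    then have "(\<beta>, \<gamma>) \<in> r \<Longrightarrow> \<beta> = \<gamma>" for \<beta>
      using ANTISYM unfolding wo_zero_def antisym_def by (metis FieldI1)
    then show ?thesis
      using zero assms(2) by (metis order_refl wo_iterate_zero)
  next
    case succ
    then have IH: "?T \<delta> \<le> F (?T \<delta>)" "?mono \<delta>"
      using "1.IH" by (auto simp: wo_succ_of_def)
    have step: "?T \<delta> \<le> ?T \<gamma>"
      using IH(1) wo_iterate_succ[OF succ, of z F] by simp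
    then have "?T \<gamma> \<le> F (?T \<gamma>)"
      using wo_iterate_succ[OF succ, of z F] monoD[OF assms(1)] by metis
    moreover have "?mono \<gamma>"
      using IH(2) step wo_succ_of_below[OF succ] order_trans by blast
    ultimately show ?thesis ..
  next
    case limit
    have below: "?T \<beta> \<le> ?T \<gamma>" if "(\<beta>, \<gamma>) \<in> r - Id" for \<beta>
      using that wo_iterate_limit[OF limit, of z F] by (auto intro: SUP_upper)
    have "?T \<beta> \<le> F (?T \<gamma>)" if "(\<beta>, \<gamma>) \<in> r - Id" for \<beta>
      using "1.IH"[OF that] below[OF that] monoD[OF assms(1)] order_trans by blast
    then have "?T \<gamma> \<le> F (?T \<gamma>)"
      using wo_iterate_limit[OF limit, of z F] by (auto intro: SUP_least)
    moreover have "?mono \<gamma>"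
      using below by auto
    ultimately show ?thesis ..
  qed
qed

lemma wo_iterate_mono:
  "mono F \<Longrightarrow> z \<le> F z \<Longrightarrow> (\<beta>, \<gamma>) \<in> r \<Longrightarrow> wo_iterate r z F \<beta> \<le> wo_iterate r z F \<gamma>"
  using wo_iterate_le_step_and_mono by blast

lemma wo_iterate_le:
  assumes "z \<le> c" and "\<And>x. x \<le> c \<Longrightarrow> F x \<le> c"
  shows "wo_iterate r z F \<beta> \<le> c"
proof (induction \<beta> rule: wf_induct_rule[OF WF])
  case (1 \<beta>)
  consider (zero) "wo_zero r \<beta>" | (succ) \<gamma> where "wo_succ_of r \<gamma> \<beta>"
    | (limit) "\<not> wo_zero r \<beta>" "\<nexists>\<gamma>. wo_succ_of r \<gamma> \<beta>"
    by blast
  then show ?case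
  proof cases
    case zero
    then show ?thesis
      using assms(1) by (simp add: wo_iterate_zero)
  next
    case succ
    then have "wo_iterate r z F \<gamma> \<le> c"
      using "1.IH" by (simp add: wo_succ_of_def)
    then show ?thesis
      using assms(2) wo_iterate_succ[OF succ] by metis
  next
    case limit
    then show ?thesis
      using "1.IH" by (auto simp: wo_iterate_limit intro!: SUP_least)
  qed
qed

end

unbundle cardinal_syntax

lemma not_inj_on_Pow_Pow_minus_point:
  fixes g :: "'a set set \<Rightarrow> 'a \<times> bool"
  shows "\<not> inj_on g (- {m})"
proof
  assume inj: "inj_on g (- {m})"
  show False
  proof (cases "finite (UNIV :: 'a set)")
    case True
    define n where "n = card (UNIV :: 'a set)"
    have "card (UNIV :: 'a set set set) = 2 ^ 2 ^ n"
      using True by (simp add: n_def card_Pow flip: Pow_UNIV)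
    then have "card (- {m}) = 2 ^ 2 ^ n - 1"
      using True by (simp add: Compl_eq_Diff_UNIV card_Diff_singleton)
    moreover have "card (- {m}) \<le> 2 * n"
      using card_inj_on_le[OF inj subset_UNIV] True
      by (simp add: n_def card_UNIV_bool card_cartesian_product flip: UNIV_Times_UNIV)
    moreover have "2 * n + 2 \<le> 2 ^ 2 ^ n"
    proof -
      have "n + 1 \<le> 2 ^ n"
        using less_exp[of n] by (simp only: Suc_eq_plus1[symmetric] Suc_le_eq)
      then have "2 * (n + 1) \<le> (2::nat) ^ (n + 1)"
        by simp
      also have "\<dots> \<le> 2 ^ 2 ^ n"
        using \<open>n + 1 \<le> 2 ^ n\<close> by (intro power_increasing) simp_all
      finally show ?thesis by simp
    qed
    ultimately show False by linarith
  next
    case False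
    define f :: "'a set \<Rightarrow> 'a set set" where "f A = (if {A} = m then {} else {A})" for A
    have "inj f" and "range f \<subseteq> - {m}"
      unfolding f_def inj_def by auto
    then have "|UNIV :: 'a set set| \<le>o |- {m}|"
      using card_of_ordLeq by blast
    also have "|- {m}| \<le>o |UNIV :: ('a \<times> bool) set|"
      using inj card_of_ordLeq by blast
    also have "|UNIV :: ('a \<times> bool) set| =o |UNIV :: 'a set|"
    proof -
      obtain a b :: 'a where "a \<noteq> b"
        using False by (metis finite.emptyI finite_insert insertI1 UNIV_eq_I)
      then have "inj (\<lambda>x. if x then a else b)"
        unfolding inj_def by auto
      then have "|UNIV :: bool set| \<le>o |UNIV :: 'a set|"
        using card_of_ordLeq by blast
      then show ?thesis
        using card_of_Times_infinite[OF False, of "UNIV :: bool set"]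
        by (simp flip: UNIV_Times_UNIV)
    qed
    finally show False
      using card_of_Pow[of "UNIV :: 'a set"] not_ordLess_ordLeq by (metis Pow_UNIV)
  qed
qed

lemma (in wo_rel) strict_tower_inj_on_successors:
  fixes T :: "'a \<Rightarrow> 'k \<Rightarrow> 'b set"
  assumes mono: "\<And>\<alpha> \<beta>. (\<alpha>, \<beta>) \<in> r \<Longrightarrow> T \<alpha> \<le> T \<beta>"
    and strict: "\<And>\<alpha> \<beta>. wo_succ_of r \<alpha> \<beta> \<Longrightarrow> T \<beta> \<noteq> T \<alpha>"
  obtains new :: "'a \<Rightarrow> 'b \<times> 'k" where "inj_on new {\<alpha>. \<exists>\<beta>. wo_succ_of r \<alpha> \<beta>}"
proof -
  have new_point: "\<exists>x k. x \<in> T \<beta> k \<and> x \<notin> T \<alpha> k" if succ: "wo_succ_of r \<alpha> \<beta>" for \<alpha> \<beta>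
  proof -
    obtain k where "T \<beta> k \<noteq> T \<alpha> k"
      using strict[OF succ] by (metis ext)
    moreover have "T \<alpha> k \<subseteq> T \<beta> k"
      using succ mono by (simp add: wo_succ_of_def le_fun_def)
    ultimately show ?thesis
      by blast
  qed
  have "\<exists>p. \<forall>\<beta>. wo_succ_of r \<alpha> \<beta> \<longrightarrow> fst p \<in> T \<beta> (snd p) \<and> fst p \<notin> T \<alpha> (snd p)" for \<alpha>
  proof (cases "\<exists>\<beta>. wo_succ_of r \<alpha> \<beta>")
    case True
    then obtain \<beta> where \<beta>: "wo_succ_of r \<alpha> \<beta>" ..
    then obtain x k where "x \<in> T \<beta> k" "x \<notin> T \<alpha> k"
      using new_point by blast
    then show ?thesis
      using wo_succ_of_succ_unique[OF \<beta>] by (intro exI[of _ "(x, k)"]) auto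
  qed simp
  then obtain new where new: "\<And>\<alpha> \<beta>. wo_succ_of r \<alpha> \<beta> \<Longrightarrow>
      fst (new \<alpha>) \<in> T \<beta> (snd (new \<alpha>)) \<and> fst (new \<alpha>) \<notin> T \<alpha> (snd (new \<alpha>))"
    by metis
  have new_distinct: "new \<alpha> \<noteq> new \<alpha>'"
    if \<beta>: "wo_succ_of r \<alpha> \<beta>" and \<beta>': "wo_succ_of r \<alpha>' \<beta>'" and less: "(\<alpha>, \<alpha>') \<in> r" "\<alpha> \<noteq> \<alpha>'"
    for \<alpha> \<alpha>' \<beta> \<beta>'
  proof -
    have "T \<beta> (snd (new \<alpha>)) \<subseteq> T \<alpha>' (snd (new \<alpha>))"
      using mono[OF wo_succ_of_above[OF \<beta> less]] by (simp add: le_fun_def)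
    then have "fst (new \<alpha>) \<in> T \<alpha>' (snd (new \<alpha>))"
      using new[OF \<beta>] by blast
    then show ?thesis
      using new[OF \<beta>'] by metis
  qed
  have "inj_on new {\<alpha>. \<exists>\<beta>. wo_succ_of r \<alpha> \<beta>}"
  proof (rule inj_onI)
    fix \<alpha> \<alpha>' assume "\<alpha> \<in> {\<alpha>. \<exists>\<beta>. wo_succ_of r \<alpha> \<beta>}" "\<alpha>' \<in> {\<alpha>. \<exists>\<beta>. wo_succ_of r \<alpha> \<beta>}"
      and eq: "new \<alpha> = new \<alpha>'"
    then obtain \<beta> \<beta>' where \<beta>: "wo_succ_of r \<alpha> \<beta>" and \<beta>': "wo_succ_of r \<alpha>' \<beta>'"
      by blast
    then have "\<alpha> \<in> Field r" "\<alpha>' \<in> Field r"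
      unfolding wo_succ_of_def by (auto intro: FieldI1)
    then show "\<alpha> = \<alpha>'"
      using TOTALS new_distinct[OF \<beta> \<beta>'] new_distinct[OF \<beta>' \<beta>] eq by metis
  qed
  then show thesis ..
qed

lemma mono_tower_stabilises:
  fixes r :: "('a set set \<times> 'a set set) set" and T :: "'a set set \<Rightarrow> bool \<Rightarrow> 'a set"
  assumes wo: "Well_order r" and field: "Field r = UNIV"
    and mono: "\<And>\<alpha> \<beta>. (\<alpha>, \<beta>) \<in> r \<Longrightarrow> T \<alpha> \<le> T \<beta>"
  shows "\<exists>\<alpha> \<beta>. wo_succ_of r \<alpha> \<beta> \<and> T \<beta> = T \<alpha>"
proof (rule ccontr)
  interpret wo_rel r
    using wo by (simp add: wo_rel_def)
  assume "\<not> ?thesis"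
  then have "T \<beta> \<noteq> T \<alpha>" if "wo_succ_of r \<alpha> \<beta>" for \<alpha> \<beta>
    using that by blast
  then obtain new :: "'a set set \<Rightarrow> 'a \<times> bool" where "inj_on new {\<alpha>. \<exists>\<beta>. wo_succ_of r \<alpha> \<beta>}"
    using strict_tower_inj_on_successors[of T, OF mono] by blast
  moreover obtain m where "\<forall>\<alpha>\<in>Field r - {m}. \<exists>\<beta>. wo_succ_of r \<alpha> \<beta>"
    using wo_succ_of_exists_but_max ..
  ultimately have "inj_on new (- {m})"
    using field by (auto intro: inj_on_subset)
  then show False
    using not_inj_on_Pow_Pow_minus_point by blast
qed

section \<open>The hierarchy below a complete extension\<close>

lemma (in wo_rel) hierarchy_extends:
  assumes hier: "hierarchy r L \<phi> H \<theta>" and ext: "extends C \<psi> L \<phi>" and compl: "complete_vs C \<psi>"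
  shows "(\<beta>, \<theta>) \<in> r \<Longrightarrow> extends C \<psi> (fst (H \<beta> k)) (snd (H \<beta> k))"
proof (induction \<beta> arbitrary: k rule: wf_induct_rule[OF WF])
  case (1 \<beta>)
  have IH: "extends C \<psi> (fst (H \<gamma> k')) (snd (H \<gamma> k'))" if "(\<gamma>, \<beta>) \<in> r" "\<gamma> \<noteq> \<beta>" for \<gamma> k'
    using "1.IH"[of \<gamma>] "1.prems" that TRANS unfolding trans_def by blast
  note stage = hier[unfolded hierarchy_def, rule_format, OF "1.prems"]
  consider (zero) "wo_zero r \<beta>" | (succ) \<gamma> where "wo_succ_of r \<gamma> \<beta>" | (limit) "wo_limit r \<beta>"
    using "1.prems" unfolding wo_limit_def by (blast intro: FieldI1)
  then show ?case
  proof cases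
    case zero
    then have "pm_eq (H \<beta> k) (L, \<phi>)"
      using stage by (cases k) auto
    then show ?thesis
      using extends_pm_eq ext by fastforce
  next
    case succ
    then have IH\<gamma>: "extends C \<psi> (fst (H \<gamma> k')) (snd (H \<gamma> k'))" for k'
      using IH by (simp add: wo_succ_of_def)
    have "pm_eq (H \<beta> True) (Pi_ext (H \<gamma> False))" "pm_eq (H \<beta> False) (Sigma_ext (H \<gamma> True))"
      using stage succ by blast+
    moreover have "Pi_complete C \<psi>" "Sigma_complete C \<psi>"
      using compl by (simp_all add: complete_vs_def)
    ultimately have "extends C \<psi> (fst (H \<beta> True)) (snd (H \<beta> True))"
      "extends C \<psi> (fst (H \<beta> False)) (snd (H \<beta> False))"
      using extends_pm_eq extends_Pi_ext[OF _ IH\<gamma>] extends_Sigma_ext[OF _ IH\<gamma>] by blast+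
    then show ?thesis
      by (cases k) simp_all
  next
    case limit
    then show ?thesis
      using stage IH unfolding extends_def by fastforce
  qed
qed

lemma collapsed_at_extends:
  assumes "collapsed_at L \<phi> Q" and "extends C \<psi> L \<phi>" and "complete_vs C \<psi>"
  shows "extends C \<psi> (fst Q) (snd Q)"
proof -
  obtain r :: "('a set set \<times> 'a set set) set" and \<alpha> \<beta> H k where
    "Well_order r" "wo_succ_of r \<alpha> \<beta>" "hierarchy r L \<phi> H \<beta>" "Q = H \<alpha> k"
    using assms(1) unfolding collapsed_at_def by blast
  then show ?thesis
    using wo_rel.hierarchy_extends[of r L \<phi> H \<beta> C \<psi> \<alpha> k] assms(2,3)
    by (simp add: wo_rel_def wo_succ_of_def)
qed

(* Only the domains of the stages are constructed: by completeness of \<psi>, every stage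
   carries \<psi> itself as its valuation. *)
definition Pi_Sigma_step ::
  "('a::lattice \<Rightarrow> 'e::ordered_ab_group_add) \<Rightarrow> (bool \<Rightarrow> 'a set) \<Rightarrow> bool \<Rightarrow> 'a set"
  where "Pi_Sigma_step \<psi> X k = (if k then Pi_dom (X False, \<psi>) else Sigma_dom (X True, \<psi>))"

abbreviation Pi_Sigma_tower ::
  "('i \<times> 'i) set \<Rightarrow> 'a::lattice set \<Rightarrow> ('a \<Rightarrow> 'e::ordered_ab_group_add) \<Rightarrow> 'i \<Rightarrow> bool \<Rightarrow> 'a set"
  where "Pi_Sigma_tower r L \<psi> \<equiv> wo_iterate r (\<lambda>_. L) (Pi_Sigma_step \<psi>)"

lemma mono_Pi_Sigma_step: "mono (Pi_Sigma_step \<psi>)"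
  by (rule monoI) (simp add: le_fun_def Pi_Sigma_step_def Pi_dom_mono Sigma_dom_mono)

lemma const_le_Pi_Sigma_step: "(\<lambda>_. L) \<le> Pi_Sigma_step \<psi> (\<lambda>_. L)"
  using subset_Pi_dom[of "(L, \<psi>)"] subset_Sigma_dom[of "(L, \<psi>)"]
  by (simp add: le_fun_def Pi_Sigma_step_def)

lemma Pi_Sigma_step_le:
  assumes "complete_vs C \<psi>" and "X \<le> (\<lambda>_. C)"
  shows "Pi_Sigma_step \<psi> X \<le> (\<lambda>_. C)"
proof -
  have ext: "extends C \<psi> (fst (X k, \<psi>)) (snd (X k, \<psi>))" for k
    using assms(2) by (simp add: extends_def le_fun_def)
  have "Pi_dom (X False, \<psi>) \<subseteq> C" "Sigma_dom (X True, \<psi>) \<subseteq> C"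
    using extends_Pi_ext[OF _ ext] extends_Sigma_ext[OF _ ext] assms(1)
    by (simp_all add: complete_vs_def extends_def Pi_ext_def Sigma_ext_def)
  then show ?thesis
    by (simp add: le_fun_def Pi_Sigma_step_def)
qed

lemma (in wo_rel) Pi_Sigma_tower_subset:
  assumes "complete_vs C \<psi>" and "L \<subseteq> C"
  shows "Pi_Sigma_tower r L \<psi> \<beta> k \<subseteq> C"
  using wo_iterate_le[of "\<lambda>_. L" "\<lambda>_. C" "Pi_Sigma_step \<psi>"] Pi_Sigma_step_le[OF assms(1)]
    assms(2)
  by (simp add: le_fun_def)

lemma (in wo_rel) Pi_Sigma_tower_hierarchy:
  assumes val: "valuation C \<psi>" and compl: "complete_vs C \<psi>" and ext: "extends C \<psi> L \<phi>"
  shows "hierarchy r L \<phi> (\<lambda>\<beta> k. (Pi_Sigma_tower r L \<psi> \<beta> k, \<psi>)) \<theta>"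
proof -
  let ?T = "Pi_Sigma_tower r L \<psi>"
  have ext_T: "extends C \<psi> (fst (?T \<beta> k, \<psi>)) (snd (?T \<beta> k, \<psi>))" for \<beta> k
    using Pi_Sigma_tower_subset[OF compl] ext by (simp add: extends_def)
  have zero: "pm_eq (?T \<beta> k, \<psi>) (L, \<phi>)" if "wo_zero r \<beta>" for \<beta> k
    using that ext by (simp add: wo_iterate_zero pm_eq_def extends_def)
  have succ: "pm_eq (?T \<beta> True, \<psi>) (Pi_ext (?T \<gamma> False, \<psi>))"
    "pm_eq (?T \<beta> False, \<psi>) (Sigma_ext (?T \<gamma> True, \<psi>))" if "wo_succ_of r \<gamma> \<beta>" for \<beta> \<gamma>
    using wo_iterate_succ[OF that, of "\<lambda>_. L" "Pi_Sigma_step \<psi>"]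
      extends_Pi_ext[OF _ ext_T] extends_Sigma_ext[OF _ ext_T] compl
    by (simp_all add: pm_eq_def extends_def Pi_ext_def Sigma_ext_def Pi_Sigma_step_def
        complete_vs_def)
  have limit: "?T \<beta> k = (\<Union>\<gamma>\<in>{\<gamma>. (\<gamma>, \<beta>) \<in> r \<and> \<gamma> \<noteq> \<beta>}. ?T \<gamma> k)" if "wo_limit r \<beta>" for \<beta> k
    using that wo_iterate_limit[of \<beta> "\<lambda>_. L" "Pi_Sigma_step \<psi>"] unfolding wo_limit_def
    by (simp add: SUP_apply)
  show ?thesis
    unfolding hierarchy_def
    using zero succ limit val compl
      Pi_extendible_if_extends[OF _ _ ext_T] Sigma_extendible_if_extends[OF _ _ ext_T]
    by (simp add: complete_vs_def)
qed

lemma Pi_Sigma_tower_collapsed_at: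
  fixes r :: "('a::lattice set set \<times> 'a set set) set"
    and L :: "'a set" and \<psi> :: "'a \<Rightarrow> 'e::ordered_ab_group_add"
  defines "T \<equiv> Pi_Sigma_tower r L \<psi>"
  assumes wo: "Well_order r" and val: "valuation C \<psi>" and compl: "complete_vs C \<psi>"
    and ext: "extends C \<psi> L \<phi>" and succ: "wo_succ_of r \<alpha> \<beta>" and stable: "T \<beta> = T \<alpha>"
  shows "collapsed_at L \<phi> (T \<alpha> True, \<psi>)"
proof -
  interpret wo_rel r
    using wo by (simp add: wo_rel_def)
  have "T \<beta> = Pi_Sigma_step \<psi> (T \<alpha>)"
    unfolding T_def by (rule wo_iterate_succ[OF succ])
  then have fixpoint: "T \<alpha> = Pi_Sigma_step \<psi> (T \<alpha>)"
    using stable by metis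
  have Pi_step: "T \<alpha> True = Pi_dom (T \<alpha> False, \<psi>)"
    using fun_cong[OF fixpoint, of True] by (simp only: Pi_Sigma_step_def if_True)
  have Sigma_step: "T \<alpha> False = Sigma_dom (T \<alpha> True, \<psi>)"
    using fun_cong[OF fixpoint, of False] by (simp only: Pi_Sigma_step_def if_False)
  have "T \<alpha> False \<subseteq> T \<alpha> True"
    using subset_Pi_dom[of "(T \<alpha> False, \<psi>)"] Pi_step by simp
  moreover have "T \<alpha> True \<subseteq> T \<alpha> False"
    using subset_Sigma_dom[of "(T \<alpha> True, \<psi>)"] Sigma_step by simp
  ultimately have "T \<alpha> False = T \<alpha> True"
    by (rule subset_antisym)
  then have fixed: "Pi_dom (T \<alpha> True, \<psi>) = T \<alpha> True" "Sigma_dom (T \<alpha> True, \<psi>) = T \<alpha> True"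
    using Pi_step Sigma_step by metis+
  have ext_T: "extends C \<psi> (fst (T \<alpha> True, \<psi>)) (snd (T \<alpha> True, \<psi>))"
    using Pi_Sigma_tower_subset[OF compl] ext unfolding T_def by (simp add: extends_def)
  have "pm_eq (Pi_ext (T \<alpha> True, \<psi>)) (T \<alpha> True, \<psi>)"
    "pm_eq (Sigma_ext (T \<alpha> True, \<psi>)) (T \<alpha> True, \<psi>)"
    using extends_Pi_ext[OF _ ext_T] extends_Sigma_ext[OF _ ext_T] compl fixed
    by (simp_all add: pm_eq_def extends_def Pi_ext_def Sigma_ext_def complete_vs_def)
  moreover have "hierarchy r L \<phi> (\<lambda>\<beta> k. (T \<beta> k, \<psi>)) \<beta>"
    unfolding T_def using Pi_Sigma_tower_hierarchy[OF val compl ext] .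
  ultimately show ?thesis
    unfolding collapsed_at_def
    using wo succ val compl
      Pi_extendible_if_extends[OF _ _ ext_T] Sigma_extendible_if_extends[OF _ _ ext_T]
    by (fastforce simp: complete_vs_def)
qed

theorem proposition5p36:
  fixes L C :: "'a::lattice set"
    and \<phi> \<psi> :: "'a \<Rightarrow> 'e::ordered_ab_group_add"
  assumes "valuation_system L \<phi>"
    and "valuation_system C \<psi>"
    and "extends C \<psi> L \<phi>"
    and "complete_vs C \<psi>"
  shows "extendible L \<phi> \<and> extends C \<psi> (fst (phibar L \<phi>)) (snd (phibar L \<phi>))"
proof -
  have val: "valuation C \<psi>"
    using assms(2) by (simp add: valuation_system_def)
  obtain r :: "('a set set \<times> 'a set set) set" where "well_order_on UNIV r"
    using well_order_on by blast
  then have wo: "Well_order r" and field: "Field r = UNIV"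
    using well_order_on_Well_order by blast+
  then interpret wo_rel r
    by (simp add: wo_rel_def)
  define T where "T = Pi_Sigma_tower r L \<psi>"
  have "T \<alpha> \<le> T \<beta>" if "(\<alpha>, \<beta>) \<in> r" for \<alpha> \<beta>
    unfolding T_def using wo_iterate_mono mono_Pi_Sigma_step const_le_Pi_Sigma_step that by blast
  then obtain \<alpha> \<beta> where "wo_succ_of r \<alpha> \<beta>" and "T \<beta> = T \<alpha>"
    using mono_tower_stabilises[OF wo field] by blast
  then have "collapsed_at L \<phi> (T \<alpha> True, \<psi>)"
    using Pi_Sigma_tower_collapsed_at[OF wo val assms(4,3)] unfolding T_def by blast
  then have extendible: "extendible L \<phi>"
    unfolding extendible_def ..
  then have "collapsed_at L \<phi> (phibar L \<phi>)"
    unfolding extendible_def phibar_def by (rule someI_ex)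
  then show ?thesis
    using extendible collapsed_at_extends assms(3,4) by blast
qed

end
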